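(* Assume $\gamma=0$, $L$ is conformal, and $s$ is not a root of unity. If $M$ is a simple $L$-module with $HM=M$ and $hM=0$, then $\operatorname{ann}M=\langle h\rangle$.
   Context: Let $r,s\in\mathbb C^\times$, $\phi\in\mathbb C[x]$, and $L=L(\phi,r,s,0)$ the associative $\mathbb C$-algebra generated by $u,d,h$ with $hu=ruh$, $dh=rhd$, $du-sud=\phi(h)$. $L$ is conformal if there is $\psi\in\mathbb C[x]$ with $s\psi(x)-\psi(rx)=\phi(x)$; fix such $\psi$ and set $H=ud+\psi(h)$, so $Hu=suH$, $dH=sHd$. Modules are left modules; $\langle\cdots\rangle$ denotes a two-sided ideal. *)

theory Defs
  imports Complex_Main "HOL-Library.Poly_Mapping" "HOL-Computational_Algebra.Polynomial"
begin

datatype gen = Gu | Gd | Gh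

datatype word = Word "gen list"

fun word_list :: "word \<Rightarrow> gen list" where "word_list (Word l) = l"

instantiation word :: monoid_add
begin
definition zero_word :: word where "zero_word = Word []"
definition plus_word :: "word \<Rightarrow> word \<Rightarrow> word"
  where "plus_word a b = Word (word_list a @ word_list b)"
instance
proof
  fix a b c :: word
  show "a + b + c = a + (b + c)" by (cases a; cases b; cases c) (simp add: plus_word_def)
  show "0 + a = a" by (cases a) (simp add: plus_word_def zero_word_def)
  show "a + 0 = a" by (cases a) (simp add: plus_word_def zero_word_def)
qed
end

text \<open>Free associative C-algebra on u, d, h: finitely supported functions words -> C,
  multiplication is convolution over concatenation (a ring_1).\<close>
type_synonym free_alg = "word \<Rightarrow>\<^sub>0 complex"

definition gen_el :: "gen \<Rightarrow> free_alg" where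
  "gen_el g = Poly_Mapping.single (Word [g]) 1"

definition cst :: "complex \<Rightarrow> free_alg" where
  "cst c = Poly_Mapping.single (Word []) c"

abbreviation "uF \<equiv> gen_el Gu"
abbreviation "dF \<equiv> gen_el Gd"
abbreviation "hF \<equiv> gen_el Gh"

definition poly_h :: "complex poly \<Rightarrow> free_alg" where
  "poly_h p = (\<Sum>i\<le>degree p. cst (coeff p i) * hF ^ i)"

text \<open>Defining relations of L = L(phi,r,s,0).\<close>
definition L_rels :: "complex poly \<Rightarrow> complex \<Rightarrow> complex \<Rightarrow> free_alg set" where
  "L_rels \<phi> r s = { hF * uF - cst r * (uF * hF),
                     dF * hF - cst r * (hF * dF),
                     dF * uF - cst s * (uF * dF) - poly_h \<phi> }"

inductive_set ideal_gen :: "'a::ring set \<Rightarrow> 'a set" for S where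
  base: "x \<in> S \<Longrightarrow> x \<in> ideal_gen S"
| zero: "0 \<in> ideal_gen S"
| add: "x \<in> ideal_gen S \<Longrightarrow> y \<in> ideal_gen S \<Longrightarrow> x + y \<in> ideal_gen S"
| lmult: "x \<in> ideal_gen S \<Longrightarrow> a * x \<in> ideal_gen S"
| rmult: "x \<in> ideal_gen S \<Longrightarrow> x * a \<in> ideal_gen S"

definition gen_op :: "('m \<Rightarrow> 'm) \<Rightarrow> ('m \<Rightarrow> 'm) \<Rightarrow> ('m \<Rightarrow> 'm) \<Rightarrow> gen \<Rightarrow> 'm \<Rightarrow> 'm" where
  "gen_op U D Hh g = (case g of Gu \<Rightarrow> U | Gd \<Rightarrow> D | Gh \<Rightarrow> Hh)"

definition word_act :: "('m \<Rightarrow> 'm) \<Rightarrow> ('m \<Rightarrow> 'm) \<Rightarrow> ('m \<Rightarrow> 'm) \<Rightarrow> word \<Rightarrow> 'm \<Rightarrow> 'm" where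
  "word_act U D Hh w = foldr (\<lambda>g f. gen_op U D Hh g \<circ> f) (word_list w) id"

definition act :: "(complex \<Rightarrow> 'm::ab_group_add \<Rightarrow> 'm) \<Rightarrow> ('m \<Rightarrow> 'm) \<Rightarrow> ('m \<Rightarrow> 'm) \<Rightarrow> ('m \<Rightarrow> 'm)
                   \<Rightarrow> free_alg \<Rightarrow> 'm \<Rightarrow> 'm" where
  "act sc U D Hh p m = (\<Sum>w\<in>Poly_Mapping.keys p. sc (Poly_Mapping.lookup p w) (word_act U D Hh w m))"

definition is_L_module :: "complex poly \<Rightarrow> complex \<Rightarrow> complex \<Rightarrow>
    (complex \<Rightarrow> 'm::ab_group_add \<Rightarrow> 'm) \<Rightarrow> ('m \<Rightarrow> 'm) \<Rightarrow> ('m \<Rightarrow> 'm) \<Rightarrow> ('m \<Rightarrow> 'm) \<Rightarrow> bool" where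
  "is_L_module \<phi> r s sc U D Hh \<longleftrightarrow>
     vector_space sc \<and> Vector_Spaces.linear sc sc U \<and> Vector_Spaces.linear sc sc D
     \<and> Vector_Spaces.linear sc sc Hh
     \<and> (\<forall>x\<in>L_rels \<phi> r s. \<forall>m. act sc U D Hh x m = 0)"

definition is_submodule :: "(complex \<Rightarrow> 'm::ab_group_add \<Rightarrow> 'm) \<Rightarrow> ('m \<Rightarrow> 'm) \<Rightarrow> ('m \<Rightarrow> 'm)
    \<Rightarrow> ('m \<Rightarrow> 'm) \<Rightarrow> 'm set \<Rightarrow> bool" where
  "is_submodule sc U D Hh N \<longleftrightarrow> module.subspace sc N \<and> (\<forall>p. \<forall>m\<in>N. act sc U D Hh p m \<in> N)"

definition is_simple_L_module :: "complex poly \<Rightarrow> complex \<Rightarrow> complex \<Rightarrow>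
    (complex \<Rightarrow> 'm::ab_group_add \<Rightarrow> 'm) \<Rightarrow> ('m \<Rightarrow> 'm) \<Rightarrow> ('m \<Rightarrow> 'm) \<Rightarrow> ('m \<Rightarrow> 'm) \<Rightarrow> bool" where
  "is_simple_L_module \<phi> r s sc U D Hh \<longleftrightarrow>
     is_L_module \<phi> r s sc U D Hh \<and> (UNIV :: 'm set) \<noteq> {0}
     \<and> (\<forall>N. is_submodule sc U D Hh N \<longrightarrow> N = {0} \<or> N = UNIV)"

text \<open>Annihilator, pulled back to the free algebra.  Since the annihilator contains the
  defining relations, ann_L M = <h>_L iff its preimage equals the ideal generated by
  h together with the relations.\<close>
definition ann_free :: "(complex \<Rightarrow> 'm::ab_group_add \<Rightarrow> 'm) \<Rightarrow> ('m \<Rightarrow> 'm) \<Rightarrow> ('m \<Rightarrow> 'm)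
    \<Rightarrow> ('m \<Rightarrow> 'm) \<Rightarrow> free_alg set" where
  "ann_free sc U D Hh = {p. \<forall>m. act sc U D Hh p m = 0}"

definition conformal_witness :: "complex poly \<Rightarrow> complex \<Rightarrow> complex \<Rightarrow> complex poly \<Rightarrow> bool" where
  "conformal_witness \<phi> r s \<psi> \<longleftrightarrow> (\<forall>x. s * poly \<psi> x - poly \<psi> (r * x) = poly \<phi> x)"

end

theory Submission
  imports Defs "HOL-Computational_Algebra.Fundamental_Theorem_Algebra"
begin

(* Let I be the two-sided ideal of the free algebra C<u,d,h> generated by h and the
   defining relations of L.  Every element annihilating M lies in I, by the following
   argument.
   (1) Normal form.  Modulo I the element H = ud + psi(h) becomes HF = ud + psi(0), and
       u HF = s^-1 HF u, d HF = s HF d, du = s HF - psi(0).  Hence every element of the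
       free algebra is congruent modulo I to a sum of "normal monomials" u^i q(HF) and
       q(HF) d^(i+1) with q a polynomial.
   (2) Faithfulness.  On M the operator H is bijective (onto by hypothesis, one-to-one
       since its kernel is a submodule of the simple module M).  Conjugating by H^n
       scales the monomial u^i q(HF) by s^(i n) and q(HF) d^(i+1) by s^(-(i+1) n); these
       weights are pairwise distinct because s is not a root of unity, so a Vandermonde
       argument separates the monomials.  A single nonzero monomial cannot act as zero:
       a root of q would be an eigenvalue of H, and the u- and d-strings through its
       eigenvector would force s to be a root of unity. *)

section \<open>The free algebra\<close>

lemma word_list_plus [simp]: "word_list (a + b) = word_list a @ word_list b"
  by (simp add: plus_word_def)

lemma free_alg_decomp:
  "(p::free_alg) = (\<Sum>w\<in>Poly_Mapping.keys p. Poly_Mapping.single w (Poly_Mapping.lookup p w))"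
  by (rule poly_mapping_eqI) (simp add: lookup_sum lookup_single when_def in_keys_iff)

lemma cst_eq_single: "cst c = Poly_Mapping.single 0 c"
  by (simp add: cst_def zero_word_def)

lemma cst_add: "cst (a + b) = cst a + cst b"
  by (simp add: cst_eq_single single_add)

lemma cst_mult: "cst (a * b) = cst a * cst b"
  by (simp add: cst_eq_single mult_single)

lemma cst_one [simp]: "cst 1 = 1"
  by (simp add: cst_eq_single)

lemma cst_zero [simp]: "cst 0 = 0"
  by (simp add: cst_eq_single)

lemma cst_diff: "cst (a - b) = cst a - cst b"
  by (simp add: cst_eq_single single_diff)

lemma cst_uminus: "cst (- a) = - cst a"
  by (simp add: cst_eq_single single_uminus)

lemma cst_central: "cst c * (x::free_alg) = x * cst c"
proof -
  have single: "cst c * Poly_Mapping.single w a = Poly_Mapping.single w a * cst c" for w a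
    by (simp add: cst_eq_single mult_single mult.commute)
  have "cst c * x = (\<Sum>w\<in>Poly_Mapping.keys x. cst c * Poly_Mapping.single w (Poly_Mapping.lookup x w))"
    by (subst free_alg_decomp[of x]) (simp add: sum_distrib_left)
  also have "\<dots> = (\<Sum>w\<in>Poly_Mapping.keys x. Poly_Mapping.single w (Poly_Mapping.lookup x w) * cst c)"
    by (simp add: single)
  also have "\<dots> = x * cst c"
    by (subst (2) free_alg_decomp[of x]) (simp add: sum_distrib_right)
  finally show ?thesis .
qed

lemma cst_cst: "cst a * (cst b * y) = cst (a * b) * y"
  by (simp add: cst_mult mult.assoc)

lemma cst_left_commute: "x * (cst c * y) = cst c * (x * y)"
  by (metis cst_central mult.assoc)

lemma ideal_gen_uminus: "x \<in> ideal_gen S \<Longrightarrow> - (x::'a::ring_1) \<in> ideal_gen S"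
  using ideal_gen.lmult[of x S "-1"] by simp

lemma ideal_gen_sum: "(\<And>i. i \<in> A \<Longrightarrow> f i \<in> ideal_gen S) \<Longrightarrow> sum f A \<in> ideal_gen S"
  by (induction A rule: infinite_finite_induct) (auto intro: ideal_gen.zero ideal_gen.add)

section \<open>Representations of the free algebra\<close>

locale free_rep = vector_space sc for sc :: "complex \<Rightarrow> 'm::ab_group_add \<Rightarrow> 'm" (infixr "*s" 75) +
  fixes U D Hh :: "'m \<Rightarrow> 'm"
  assumes linear_ops: "Vector_Spaces.linear sc sc U" "Vector_Spaces.linear sc sc D"
    "Vector_Spaces.linear sc sc Hh"
begin

lemma gen_op_linear: "gen_op U D Hh g (x + y) = gen_op U D Hh g x + gen_op U D Hh g y"
  "gen_op U D Hh g (c *s x) = c *s gen_op U D Hh g x"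
  using linear_ops by (cases g; simp add: gen_op_def Vector_Spaces.linear_iff)+

lemma word_act_Cons: "word_act U D Hh (Word (g # l)) m = gen_op U D Hh g (word_act U D Hh (Word l) m)"
  by (simp add: word_act_def)

lemma word_act_Nil [simp]: "word_act U D Hh (Word []) m = m"
  by (simp add: word_act_def)

lemma word_act_linear: "word_act U D Hh w (x + y) = word_act U D Hh w x + word_act U D Hh w y"
  "word_act U D Hh w (c *s x) = c *s word_act U D Hh w x"
proof -
  obtain l where w: "w = Word l" by (cases w)
  show "word_act U D Hh w (x + y) = word_act U D Hh w x + word_act U D Hh w y"
    unfolding w by (induction l) (simp_all add: word_act_Cons gen_op_linear)
  show "word_act U D Hh w (c *s x) = c *s word_act U D Hh w x"
    unfolding w by (induction l) (simp_all add: word_act_Cons gen_op_linear)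
qed

lemma word_act_plus: "word_act U D Hh (v + w) m = word_act U D Hh v (word_act U D Hh w m)"
proof -
  have foldr_comp: "foldr (\<lambda>g. (\<circ>) (f g)) l a = foldr (\<lambda>g. (\<circ>) (f g)) l id \<circ> a" for f l a
    by (induction l) auto
  show ?thesis
    by (simp add: word_act_def foldr_append foldr_comp[of _ _ "foldr _ (word_list w) id"])
qed

lemma act_on_support: "finite S \<Longrightarrow> Poly_Mapping.keys p \<subseteq> S \<Longrightarrow>
   act sc U D Hh p m = (\<Sum>w\<in>S. Poly_Mapping.lookup p w *s word_act U D Hh w m)"
  unfolding act_def by (rule sum.mono_neutral_left) (auto simp: in_keys_iff)

lemma act_add: "act sc U D Hh (p + q) m = act sc U D Hh p m + act sc U D Hh q m"
proof -
  let ?S = "Poly_Mapping.keys p \<union> Poly_Mapping.keys q"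
  have "Poly_Mapping.keys (p + q) \<subseteq> ?S" by (rule Poly_Mapping.keys_add)
  then show ?thesis
    by (simp add: act_on_support[of ?S] lookup_add scale_left_distrib sum.distrib)
qed

sublocale act_alg: additive "\<lambda>p. act sc U D Hh p m"
  by standard (rule act_add)

lemma act_linear: "act sc U D Hh p (x + y) = act sc U D Hh p x + act sc U D Hh p y"
  "act sc U D Hh p (c *s x) = c *s act sc U D Hh p x"
  unfolding act_def using word_act_linear
  by (auto simp: sum.distrib scale_right_distrib scale_sum_right mult.commute)

sublocale act_vec: additive "\<lambda>x. act sc U D Hh p x"
  by standard (rule act_linear)

lemma act_single: "act sc U D Hh (Poly_Mapping.single w a) m = a *s word_act U D Hh w m"
  by (subst act_on_support[of "{w}"]) auto

lemma act_mult: "act sc U D Hh (p * q) m = act sc U D Hh p (act sc U D Hh q m)"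
proof -
  have on_monomials: "act sc U D Hh (Poly_Mapping.single v a * Poly_Mapping.single w b) m =
      act sc U D Hh (Poly_Mapping.single v a) (act sc U D Hh (Poly_Mapping.single w b) m)" for v w a b
    by (simp add: mult_single act_single word_act_plus word_act_linear)
  have mono_left: "act sc U D Hh (Poly_Mapping.single v a * q) m =
      act sc U D Hh (Poly_Mapping.single v a) (act sc U D Hh q m)" for v a
    by (subst (1 2) free_alg_decomp[of q]) (simp add: sum_distrib_left act_alg.sum act_vec.sum on_monomials)
  show ?thesis
    by (subst (1 2) free_alg_decomp[of p]) (simp add: sum_distrib_right act_alg.sum mono_left)
qed

lemma act_cst: "act sc U D Hh (cst c) m = c *s m"
  by (simp add: cst_eq_single act_single zero_word_def)

lemma act_one: "act sc U D Hh 1 m = m"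
  using act_cst[of 1] by simp

lemma act_gen: "act sc U D Hh (gen_el g) m = gen_op U D Hh g m"
  by (simp add: gen_el_def act_single word_act_Cons)

lemma act_power: "act sc U D Hh (x ^ n) m = (act sc U D Hh x ^^ n) m"
  by (induction n arbitrary: m) (auto simp: act_one act_mult)

lemma ideal_gen_annihilates:
  assumes "S \<subseteq> ann_free sc U D Hh"
  shows "ideal_gen S \<subseteq> ann_free sc U D Hh"
proof
  fix x assume "x \<in> ideal_gen S"
  then show "x \<in> ann_free sc U D Hh"
    by (induction rule: ideal_gen.induct)
      (use assms in \<open>auto simp: ann_free_def act_alg.add act_mult act_alg.zero act_vec.zero\<close>)
qed

lemma stable_subspace_is_submodule:
  assumes sub: "subspace N" and stable: "\<And>g m. m \<in> N \<Longrightarrow> gen_op U D Hh g m \<in> N"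
  shows "is_submodule sc U D Hh N"
proof -
  have word: "word_act U D Hh w m \<in> N" if "m \<in> N" for w m
  proof -
    obtain l where w: "w = Word l" by (cases w)
    show ?thesis unfolding w by (induction l) (simp_all add: that word_act_Cons stable)
  qed
  show ?thesis
    unfolding is_submodule_def act_def
    by (auto intro: sub subspace_sum[OF sub] subspace_scale[OF sub] word)
qed

end

section \<open>Normal forms modulo the ideal generated by h and the relations\<close>

text \<open>Only the values of phi and psi at 0 matter once h is in the ideal; they are
  linked by the conformal identity at x = 0.\<close>
locale conformal_quotient =
  fixes \<phi> \<psi> :: "complex poly" and r s :: complex
  assumes s_nz: "s \<noteq> 0"
    and conformal_at_0: "s * poly \<psi> 0 - poly \<psi> 0 = poly \<phi> 0"
begin

definition I :: "free_alg set" where "I = ideal_gen ({hF} \<union> L_rels \<phi> r s)"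

text \<open>The image of H = ud + psi(h) modulo h, and polynomials in it.\<close>
definition HF :: free_alg where "HF = uF * dF + cst (poly \<psi> 0)"

definition polyHF :: "complex poly \<Rightarrow> free_alg" where
  "polyHF p = (\<Sum>j\<le>degree p. cst (coeff p j) * HF ^ j)"

lemma I_add: "x \<in> I \<Longrightarrow> y \<in> I \<Longrightarrow> x + y \<in> I"
  unfolding I_def by (rule ideal_gen.add)

lemma I_lmult: "x \<in> I \<Longrightarrow> a * x \<in> I"
  unfolding I_def by (rule ideal_gen.lmult)

lemma I_rmult: "x \<in> I \<Longrightarrow> x * a \<in> I"
  unfolding I_def by (rule ideal_gen.rmult)

lemma I_zero: "0 \<in> I"
  unfolding I_def by (rule ideal_gen.zero)

lemma I_trans: "x - y \<in> I \<Longrightarrow> y - z \<in> I \<Longrightarrow> x - z \<in> I"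
  using I_add[of "x - y" "y - z"] by simp

lemma h_in_I: "hF \<in> I"
  unfolding I_def by (rule ideal_gen.base) simp

lemma du_relation_in_I: "dF * uF - cst s * (uF * dF) - poly_h \<phi> \<in> I"
  unfolding I_def by (rule ideal_gen.base) (simp add: L_rels_def)

lemma poly_h_mod_I: "poly_h p - cst (poly p 0) \<in> I"
proof -
  have term_in_I: "cst (coeff p i) * hF ^ i - (if i = 0 then cst (coeff p 0) else 0) \<in> I" for i
  proof (cases i)
    case (Suc k)
    have "hF ^ i \<in> I" unfolding Suc power_Suc by (rule I_rmult[OF h_in_I])
    then show ?thesis using Suc by (simp add: I_lmult)
  qed (simp add: I_zero)
  have "poly_h p - cst (poly p 0) =
      (\<Sum>i\<le>degree p. cst (coeff p i) * hF ^ i - (if i = 0 then cst (coeff p 0) else 0))"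
    by (simp add: poly_h_def sum_subtractf poly_0_coeff_0)
  also have "\<dots> \<in> I"
    unfolding I_def by (rule ideal_gen_sum) (use term_in_I in \<open>simp add: I_def\<close>)
  finally show ?thesis .
qed

lemma du_mod_I: "dF * uF - (cst s * HF - cst (poly \<psi> 0)) \<in> I"
proof -
  have "cst s * HF - cst (poly \<psi> 0) = cst s * (uF * dF) + cst (s * poly \<psi> 0 - poly \<psi> 0)"
    by (simp add: HF_def distrib_left cst_mult cst_diff)
  then have split: "dF * uF - (cst s * HF - cst (poly \<psi> 0)) =
      (dF * uF - cst s * (uF * dF) - poly_h \<phi>) + (poly_h \<phi> - cst (poly \<phi> 0))"
    by (simp only: conformal_at_0) (simp add: algebra_simps)
  show ?thesis unfolding split by (rule I_add[OF du_relation_in_I poly_h_mod_I])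
qed

lemma HF_u_mod_I: "HF * uF - cst s * uF * HF \<in> I"
proof -
  have commute: "uF * cst s = cst s * uF" "uF * cst (poly \<psi> 0) = cst (poly \<psi> 0) * uF"
    by (simp_all add: cst_central)
  have "uF * (dF * uF - (cst s * HF - cst (poly \<psi> 0)))
      = uF * dF * uF - (uF * cst s) * HF + uF * cst (poly \<psi> 0)"
    by (simp add: algebra_simps)
  also have "\<dots> = HF * uF - cst s * uF * HF"
    unfolding commute by (simp add: HF_def algebra_simps)
  finally show ?thesis using I_lmult[OF du_mod_I, of uF] by simp
qed

lemma d_HF_mod_I: "dF * HF - cst s * HF * dF \<in> I"
proof -
  have "(dF * uF - (cst s * HF - cst (poly \<psi> 0))) * dF = dF * HF - cst s * HF * dF"
    by (simp add: HF_def algebra_simps cst_central[of _ dF])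
  then show ?thesis using I_rmult[OF du_mod_I, of dF] by simp
qed

lemma u_HF_mod_I: "uF * HF - cst (inverse s) * HF * uF \<in> I"
proof -
  have "- (cst (inverse s) * (HF * uF - cst s * uF * HF)) = uF * HF - cst (inverse s) * HF * uF"
    using s_nz by (simp add: algebra_simps cst_cst)
  then show ?thesis
    using I_lmult[OF HF_u_mod_I] ideal_gen_uminus unfolding I_def by metis
qed

lemma HF_upow_mod_I: "HF * uF ^ i - cst (s ^ i) * uF ^ i * HF \<in> I"
proof (induction i)
  case (Suc i)
  have "HF * uF ^ Suc i - cst (s ^ Suc i) * uF ^ Suc i * HF
     = (HF * uF - cst s * uF * HF) * uF ^ i + cst s * uF * (HF * uF ^ i - cst (s ^ i) * uF ^ i * HF)"
    by (simp add: algebra_simps cst_cst cst_left_commute[of uF])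
  also have "\<dots> \<in> I" by (intro I_add I_lmult I_rmult HF_u_mod_I Suc.IH)
  finally show ?case .
qed (simp add: I_zero)

lemma polyHF_bound: "degree p \<le> n \<Longrightarrow> polyHF p = (\<Sum>j\<le>n. cst (coeff p j) * HF ^ j)"
  unfolding polyHF_def by (rule sum.mono_neutral_left) (auto simp: coeff_eq_0)

lemma polyHF_pCons: "polyHF (pCons a p) = cst a + HF * polyHF p"
proof -
  have "polyHF (pCons a p) = (\<Sum>j\<le>Suc (degree p). cst (coeff (pCons a p) j) * HF ^ j)"
    by (rule polyHF_bound) (rule degree_pCons_le)
  also have "\<dots> = cst a + (\<Sum>j\<le>degree p. cst (coeff p j) * (HF * HF ^ j))"
    by (subst sum.atMost_Suc_shift) simp
  also have "\<dots> = cst a + HF * polyHF p"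
    by (simp add: polyHF_def sum_distrib_left cst_left_commute[of HF])
  finally show ?thesis .
qed

lemma polyHF_0 [simp]: "polyHF 0 = 0"
  by (simp add: polyHF_def)

lemma polyHF_const: "polyHF [:a:] = cst a"
  by (simp add: polyHF_pCons)

lemma polyHF_linear: "polyHF [:a, b:] = cst a + cst b * HF"
  by (simp add: polyHF_pCons cst_central)

lemma polyHF_add: "polyHF (p + q) = polyHF p + polyHF q"
proof -
  let ?n = "max (degree p) (degree q)"
  have "degree (p + q) \<le> ?n" by (rule degree_add_le) auto
  then show ?thesis
    by (simp add: polyHF_bound[of _ ?n] cst_add distrib_right sum.distrib)
qed

lemma polyHF_smult: "polyHF (smult c p) = cst c * polyHF p"
  by (induction p) (simp_all add: polyHF_pCons cst_mult distrib_left cst_left_commute[of HF] mult.assoc)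

lemma polyHF_mult: "polyHF (p * q) = polyHF p * polyHF q"
  by (induction p) (simp_all add: polyHF_pCons polyHF_add polyHF_smult distrib_right mult.assoc)

lemma twisted_commute_left:
  assumes "x * HF - cst c * HF * x \<in> I"
  shows "x * polyHF p - polyHF (pcompose p [:0, c:]) * x \<in> I"
proof (induction p)
  case (pCons a p)
  let ?q = "pcompose p [:0, c:]"
  have "x * polyHF (pCons a p) - polyHF (pcompose (pCons a p) [:0, c:]) * x
     = (x * cst a - cst a * x) + ((x * HF - cst c * HF * x) * polyHF p + cst c * HF * (x * polyHF p - polyHF ?q * x))"
    by (simp add: polyHF_pCons pcompose_pCons polyHF_add polyHF_mult polyHF_const polyHF_linear
        polyHF_smult cst_left_commute[of HF] algebra_simps)
  also have "\<dots> \<in> I"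
    by (intro I_add I_lmult I_rmult assms pCons.IH) (simp add: cst_central I_zero)
  finally show ?case .
qed (simp add: I_zero)

lemma twisted_commute_right:
  assumes "HF * x - cst c * x * HF \<in> I"
  shows "polyHF p * x - x * polyHF (pcompose p [:0, c:]) \<in> I"
proof (induction p)
  case (pCons a p)
  let ?q = "pcompose p [:0, c:]"
  have "polyHF (pCons a p) * x - x * polyHF (pcompose (pCons a p) [:0, c:])
     = (cst a * x - x * cst a) + (HF * (polyHF p * x - x * polyHF ?q) + (HF * x - cst c * x * HF) * polyHF ?q)"
    by (simp add: polyHF_pCons pcompose_pCons polyHF_add polyHF_mult polyHF_const polyHF_linear
        polyHF_smult cst_left_commute[of HF] algebra_simps cst_central[of c x])
  also have "\<dots> \<in> I"
    by (intro I_add I_lmult I_rmult assms pCons.IH) (simp add: cst_central I_zero)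
  finally show ?case .
qed (simp add: I_zero)

lemma ud_eq_polyHF: "uF * dF = polyHF [:- poly \<psi> 0, 1:]"
  by (simp add: polyHF_linear HF_def cst_uminus)

lemma du_eq_polyHF: "cst s * HF - cst (poly \<psi> 0) = polyHF [:- poly \<psi> 0, s:]"
  by (simp add: polyHF_linear cst_uminus)

definition umon :: "nat \<Rightarrow> complex poly \<Rightarrow> free_alg" where "umon i p = uF ^ i * polyHF p"
definition dmon :: "nat \<Rightarrow> complex poly \<Rightarrow> free_alg" where "dmon i q = polyHF q * dF ^ Suc i"

lemma umon_add: "umon i (p + q) = umon i p + umon i q"
  by (simp add: umon_def polyHF_add distrib_left)

lemma dmon_add: "dmon i (p + q) = dmon i p + dmon i q"
  by (simp add: dmon_def polyHF_add distrib_right)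

lemma umon_0 [simp]: "umon i 0 = 0" and dmon_0 [simp]: "dmon i 0 = 0"
  by (simp_all add: umon_def dmon_def)

inductive_set normal_forms :: "free_alg set" where
  zero: "0 \<in> normal_forms"
| umon: "umon i p \<in> normal_forms"
| dmon: "dmon i q \<in> normal_forms"
| add: "x \<in> normal_forms \<Longrightarrow> y \<in> normal_forms \<Longrightarrow> x + y \<in> normal_forms"

lemma u_umon: "\<exists>z\<in>normal_forms. uF * umon i p - z \<in> I"
proof (rule bexI[of _ "umon (Suc i) p"])
  show "uF * umon i p - umon (Suc i) p \<in> I" by (simp add: umon_def mult.assoc I_zero)
qed (rule normal_forms.umon)

lemma u_dmon: "\<exists>z\<in>normal_forms. uF * dmon i q - z \<in> I"
proof -
  let ?q = "pcompose q [:0, inverse s:] * [:- poly \<psi> 0, 1:]"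
  have "uF * polyHF q - polyHF (pcompose q [:0, inverse s:]) * uF \<in> I"
    by (rule twisted_commute_left[OF u_HF_mod_I])
  from I_rmult[OF this, of "dF ^ Suc i"]
  have "uF * dmon i q - polyHF (pcompose q [:0, inverse s:]) * uF * dF ^ Suc i \<in> I"
    by (simp add: dmon_def algebra_simps)
  moreover have "polyHF (pcompose q [:0, inverse s:]) * uF * dF ^ Suc i = polyHF ?q * dF ^ i"
    by (simp only: polyHF_mult ud_eq_polyHF[symmetric] power_Suc mult.assoc)
  ultimately have moved: "uF * dmon i q - polyHF ?q * dF ^ i \<in> I" by simp
  show ?thesis
  proof (cases i)
    case 0
    then show ?thesis using moved normal_forms.umon[of 0 ?q] by (auto simp: umon_def)
  next
    case (Suc k)
    then show ?thesis using moved normal_forms.dmon[of k ?q] by (auto simp: dmon_def)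
  qed
qed

lemma d_umon: "\<exists>z\<in>normal_forms. dF * umon i p - z \<in> I"
proof (cases i)
  case 0
  let ?p = "pcompose p [:0, s:]"
  have "dF * polyHF p - polyHF ?p * dF \<in> I" by (rule twisted_commute_left[OF d_HF_mod_I])
  then show ?thesis using 0 normal_forms.dmon[of 0 ?p] by (auto simp: umon_def dmon_def)
next
  case (Suc k)
  let ?r = "pcompose [:- poly \<psi> 0, s:] [:0, s ^ k:]"
  have du_step: "dF * uF * (uF ^ k * polyHF p) - polyHF [:- poly \<psi> 0, s:] * (uF ^ k * polyHF p) \<in> I"
    using I_rmult[OF du_mod_I, of "uF ^ k * polyHF p"] by (simp add: du_eq_polyHF algebra_simps)
  have "polyHF [:- poly \<psi> 0, s:] * uF ^ k - uF ^ k * polyHF ?r \<in> I"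
    by (rule twisted_commute_right[OF HF_upow_mod_I])
  from I_rmult[OF this, of "polyHF p"]
  have commute_step: "polyHF [:- poly \<psi> 0, s:] * (uF ^ k * polyHF p) - uF ^ k * polyHF (?r * p) \<in> I"
    by (simp only: polyHF_mult mult.assoc left_diff_distrib)
  show ?thesis
    using I_trans[OF du_step commute_step] Suc normal_forms.umon[of k "?r * p"] by (auto simp: umon_def mult.assoc)
qed

lemma d_dmon: "\<exists>z\<in>normal_forms. dF * dmon i q - z \<in> I"
proof -
  let ?q = "pcompose q [:0, s:]"
  have "dF * polyHF q - polyHF ?q * dF \<in> I" by (rule twisted_commute_left[OF d_HF_mod_I])
  from I_rmult[OF this, of "dF ^ Suc i"]
  have "dF * dmon i q - dmon (Suc i) ?q \<in> I" by (simp add: dmon_def algebra_simps)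
  then show ?thesis using normal_forms.dmon by blast
qed

lemma h_normal_form: "\<exists>z\<in>normal_forms. hF * y - z \<in> I"
  by (intro bexI[of _ 0] normal_forms.zero) (simp add: I_rmult[OF h_in_I])

lemma gen_normal_form:
  assumes "y \<in> normal_forms" shows "\<exists>z\<in>normal_forms. gen_el g * y - z \<in> I"
  using assms
proof (induction rule: normal_forms.induct)
  case zero then show ?case by (intro bexI[of _ 0] normal_forms.zero) (simp add: I_zero)
next
  case (umon i p) then show ?case using u_umon d_umon h_normal_form by (cases g) auto
next
  case (dmon i q) then show ?case using u_dmon d_dmon h_normal_form by (cases g) auto
next
  case (add x y)
  then obtain z1 z2 where "z1 \<in> normal_forms" "z2 \<in> normal_forms"
    "gen_el g * x - z1 \<in> I" "gen_el g * y - z2 \<in> I" by blast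
  then show ?case
    by (intro bexI[of _ "z1 + z2"]) (auto intro: normal_forms.add dest: I_add simp: algebra_simps)
qed

lemma monomial_normal_form: "\<exists>z\<in>normal_forms. Poly_Mapping.single (Word l) a - z \<in> I"
proof (induction l arbitrary: a)
  case Nil
  have "Poly_Mapping.single (Word []) a = umon 0 [:a:]"
    by (simp add: umon_def polyHF_const cst_def)
  then show ?case by (intro bexI[of _ "umon 0 [:a:]"] normal_forms.umon) (simp add: I_zero)
next
  case (Cons g l)
  obtain z where z: "z \<in> normal_forms" "Poly_Mapping.single (Word l) a - z \<in> I" using Cons by blast
  obtain z' where z': "z' \<in> normal_forms" "gen_el g * z - z' \<in> I" using gen_normal_form[OF z(1)] by blast
  have split: "Poly_Mapping.single (Word (g # l)) a = gen_el g * Poly_Mapping.single (Word l) a"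
    by (simp add: gen_el_def mult_single plus_word_def)
  have "gen_el g * Poly_Mapping.single (Word l) a - gen_el g * z \<in> I"
    using I_lmult[OF z(2), of "gen_el g"] by (simp add: algebra_simps)
  then show ?case unfolding split using z' I_trans by blast
qed

lemma normal_form_exists: "\<exists>z\<in>normal_forms. (p::free_alg) - z \<in> I"
proof -
  have "\<exists>z\<in>normal_forms. (\<Sum>w\<in>A. Poly_Mapping.single w (Poly_Mapping.lookup p w)) - z \<in> I" for A
  proof (induction A rule: infinite_finite_induct)
    case (insert w A)
    obtain z where z: "z \<in> normal_forms"
      "(\<Sum>w\<in>A. Poly_Mapping.single w (Poly_Mapping.lookup p w)) - z \<in> I"
      using insert by blast
    obtain z' where z': "z' \<in> normal_forms" "Poly_Mapping.single w (Poly_Mapping.lookup p w) - z' \<in> I"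
      using monomial_normal_form by (cases w) blast
    show ?case
      using normal_forms.add[OF z'(1) z(1)] I_add[OF z'(2) z(2)] insert(1,2)
      by (intro bexI[of _ "z' + z"]) (simp_all add: algebra_simps)
  qed (intro bexI[of _ 0] normal_forms.zero; simp add: I_zero)+
  then show ?thesis by (subst free_alg_decomp) blast
qed

lemma normal_form_sum:
  assumes "y \<in> normal_forms"
  shows "\<exists>N P Q. y = (\<Sum>i<N. umon i (P i)) + (\<Sum>i<N. dmon i (Q i))"
  using assms
proof (induction rule: normal_forms.induct)
  case zero then show ?case by (intro exI[of _ 0]) simp
next
  case (umon i p)
  show ?case
    by (intro exI[of _ "Suc i"] exI[of _ "\<lambda>k. if k = i then p else 0"] exI[of _ "\<lambda>k. 0"])
      (simp add: if_distrib[of "umon _"])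
next
  case (dmon i q)
  show ?case
    by (intro exI[of _ "Suc i"] exI[of _ "\<lambda>k. 0"] exI[of _ "\<lambda>k. if k = i then q else 0"])
      (simp add: if_distrib[of "dmon _"])
next
  case (add x y)
  then obtain N1 P1 Q1 N2 P2 Q2 where
    x: "x = (\<Sum>i<N1. umon i (P1 i)) + (\<Sum>i<N1. dmon i (Q1 i))" and
    y: "y = (\<Sum>i<N2. umon i (P2 i)) + (\<Sum>i<N2. dmon i (Q2 i))" by blast
  define N where "N = max N1 N2"
  define ext where "ext M F i = (if i < M then F i else 0)" for M and F :: "nat \<Rightarrow> complex poly" and i
  have ext_sum: "(\<Sum>i<N. mon i (ext M F i)) = (\<Sum>i<M. mon i (F i))"
    if "M \<le> N" and "\<And>i. mon i 0 = 0" for M F and mon :: "nat \<Rightarrow> complex poly \<Rightarrow> free_alg"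
  proof -
    have "(\<Sum>i<N. mon i (ext M F i)) = (\<Sum>i<N. if i < M then mon i (F i) else 0)"
      by (rule sum.cong) (simp_all add: ext_def that(2))
    also have "\<dots> = (\<Sum>i\<in>{i \<in> {..<N}. i < M}. mon i (F i))"
      by (rule sum.inter_filter[symmetric]) simp
    also have "{i \<in> {..<N}. i < M} = {..<M}" using that(1) by auto
    finally show ?thesis .
  qed
  have N: "N1 \<le> N" "N2 \<le> N" by (simp_all add: N_def)
  have "x + y = (\<Sum>i<N. umon i (ext N1 P1 i)) + (\<Sum>i<N. umon i (ext N2 P2 i))
      + ((\<Sum>i<N. dmon i (ext N1 Q1 i)) + (\<Sum>i<N. dmon i (ext N2 Q2 i)))"
    by (simp add: x y ext_sum[OF N(1)] ext_sum[OF N(2)])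
  also have "\<dots> = (\<Sum>i<N. umon i (ext N1 P1 i + ext N2 P2 i)) + (\<Sum>i<N. dmon i (ext N1 Q1 i + ext N2 Q2 i))"
    by (simp add: umon_add dmon_add sum.distrib)
  finally show ?case
    by (intro exI[of _ N] exI[of _ "\<lambda>i. ext N1 P1 i + ext N2 P2 i"] exI[of _ "\<lambda>i. ext N1 Q1 i + ext N2 Q2 i"])
qed
end


section \<open>Faithfulness of normal forms on twisted modules\<close>

lemma power_inj_not_root_of_unity:
  fixes t :: complex
  assumes "t \<noteq> 0" and "\<forall>n::nat. n > 0 \<longrightarrow> t ^ n \<noteq> 1"
  shows "inj (\<lambda>k::nat. t ^ k)"
proof -
  have "t ^ a \<noteq> t ^ b" if "a < b" for a b
  proof
    assume "t ^ a = t ^ b"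
    also have "t ^ b = t ^ a * t ^ (b - a)" using \<open>a < b\<close> by (simp flip: power_add)
    finally have "t ^ (b - a) = 1" using assms(1) by simp
    with assms(2) \<open>a < b\<close> show False by simp
  qed
  then show ?thesis by (metis injI linorder_neqE_nat)
qed

lemma not_root_of_unity_inverse:
  "\<forall>n::nat. n > 0 \<longrightarrow> (t::complex) ^ n \<noteq> 1 \<Longrightarrow> \<forall>n::nat. n > 0 \<longrightarrow> inverse t ^ n \<noteq> 1"
  by (metis inverse_1 power_inverse inverse_inverse_eq)

lemma (in vector_space) vandermonde_vanishing:
  assumes "finite K" "inj_on c K" "\<forall>n::nat. (\<Sum>k\<in>K. (c k) ^ n *s w k) = 0"
  shows "\<forall>k\<in>K. w k = 0"
  using assms
proof (induction K arbitrary: w rule: finite_induct)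
  case (insert k0 K)
  let ?w = "\<lambda>k. (c k - c k0) *s w k"
  have split: "(\<Sum>k\<in>K. (c k) ^ n *s w k) = - ((c k0) ^ n *s w k0)" for n
    using insert(1,2,5) sum.insert[OF insert(1,2), of "\<lambda>k. (c k) ^ n *s w k"]
    by (simp add: add.commute eq_neg_iff_add_eq_0)
  (* eliminate k0: the vectors (c k - c k0) w k satisfy the same hypothesis on K *)
  have "(\<Sum>k\<in>K. (c k) ^ n *s ?w k) = 0" for n
  proof -
    have summand: "(c k) ^ n *s ?w k = (c k) ^ Suc n *s w k - c k0 *s ((c k) ^ n *s w k)" for k
      by (simp add: scale_left_diff_distrib[symmetric] right_diff_distrib mult.commute)
    have "(\<Sum>k\<in>K. (c k) ^ n *s ?w k)
        = (\<Sum>k\<in>K. (c k) ^ Suc n *s w k) - c k0 *s (\<Sum>k\<in>K. (c k) ^ n *s w k)"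
      by (simp only: summand sum_subtractf scale_sum_right)
    also have "\<dots> = - ((c k0) ^ Suc n *s w k0) - c k0 *s (- ((c k0) ^ n *s w k0))"
      by (simp only: split)
    also have "\<dots> = 0" by (simp add: mult.commute)
    finally show ?thesis .
  qed
  then have "\<forall>k\<in>K. ?w k = 0" using insert(3)[of ?w] insert(4) by auto
  moreover have "\<forall>k\<in>K. c k \<noteq> c k0" using insert(2,4) by (auto simp: inj_on_def)
  ultimately have "\<forall>k\<in>K. w k = 0" by auto
  moreover from this have "w k0 = 0" using split[of 0] by simp
  ultimately show ?case by simp
qed simp

text \<open>A twisted module: H is bijective, u multiplies H by s, d divides it by s, and du, ud
  are affine in H.  These are the identities that L-modules with h M = 0 satisfy.\<close>
locale twisted_module = vector_space sc for sc :: "complex \<Rightarrow> 'm::ab_group_add \<Rightarrow> 'm" (infixr "*s" 75) +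
  fixes U D H :: "'m \<Rightarrow> 'm" and s \<psi>0 :: complex
  assumes linU: "U (x + y) = U x + U y" "U (c *s x) = c *s U x"
    and linD: "D (x + y) = D x + D y" "D (c *s x) = c *s D x"
    and linH: "H (x + y) = H x + H y" "H (c *s x) = c *s H x"
    and H_inj: "inj H" and H_surj: "surj H"
    and H_U: "H (U x) = s *s U (H x)"
    and D_H: "D (H x) = s *s H (D x)"
    and D_U: "D (U x) = s *s H x - \<psi>0 *s x"
    and U_D: "U (D x) = H x - \<psi>0 *s x"
    and s_nz: "s \<noteq> 0"
    and s_not_root: "\<forall>n::nat. n > 0 \<longrightarrow> s ^ n \<noteq> 1"
    and nontrivial: "\<exists>x::'m. x \<noteq> 0"
begin

lemma funpow_linear:
  assumes "\<And>x y. F (x + y) = F x + F y" "\<And>c x. F (c *s x) = c *s F x"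
  shows "(F ^^ n) (x + y) = (F ^^ n) x + (F ^^ n) y" "(F ^^ n) (c *s x) = c *s (F ^^ n) x"
  by (induction n) (auto simp: assms)

lemmas Upow = funpow_linear[OF linU] and Dpow = funpow_linear[OF linD] and Hpow = funpow_linear[OF linH]

sublocale H_add: additive H by standard (rule linH)
sublocale Upow_add: additive "U ^^ n" for n by standard (rule Upow)
sublocale Dpow_add: additive "D ^^ n" for n by standard (rule Dpow)
sublocale Hpow_add: additive "H ^^ n" for n by standard (rule Hpow)

lemma U_zero [simp]: "U 0 = 0" and D_zero [simp]: "D 0 = 0" and H_zero [simp]: "H 0 = 0"
  using linU(2)[of 0 0] linD(2)[of 0 0] linH(2)[of 0 0] by simp_all

definition polyH :: "complex poly \<Rightarrow> 'm \<Rightarrow> 'm" where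
  "polyH q x = (\<Sum>j\<le>degree q. coeff q j *s (H ^^ j) x)"

lemma polyH_pCons: "polyH (pCons a p) x = a *s x + H (polyH p x)"
proof -
  have "polyH (pCons a p) x = (\<Sum>j\<le>Suc (degree p). coeff (pCons a p) j *s (H ^^ j) x)"
    unfolding polyH_def by (rule sum.mono_neutral_left) (auto simp: coeff_eq_0 degree_pCons_le)
  also have "\<dots> = a *s x + (\<Sum>j\<le>degree p. coeff p j *s H ((H ^^ j) x))"
    by (subst sum.atMost_Suc_shift) simp
  also have "\<dots> = a *s x + H (polyH p x)"
    by (simp add: polyH_def H_add.sum linH)
  finally show ?thesis .
qed

lemma polyH_0 [simp]: "polyH 0 x = 0"
  by (simp add: polyH_def)

lemma polyH_linear: "polyH p (x + y) = polyH p x + polyH p y" "polyH p (c *s x) = c *s polyH p x"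
  by (induction p) (simp_all add: polyH_pCons linH scale_right_distrib)

lemma polyH_add: "polyH (p + q) x = polyH p x + polyH q x"
proof (induction p arbitrary: q)
  case (pCons a p)
  obtain b q' where q: "q = pCons b q'" by (cases q)
  show ?case
    by (simp add: q polyH_pCons linH scale_left_distrib pCons.IH[of q'] H_add.add algebra_simps)
qed simp

lemma polyH_smult: "polyH (smult c p) x = c *s polyH p x"
  by (induction p) (simp_all add: polyH_pCons linH scale_right_distrib)

lemma polyH_mult: "polyH (p * q) x = polyH p (polyH q x)"
  by (induction p) (simp_all add: polyH_pCons polyH_add polyH_smult)

lemma polyH_const: "polyH [:a:] x = a *s x"
  by (simp add: polyH_pCons)

lemma polyH_linear_poly: "polyH [:a, b:] x = a *s x + b *s H x"
  by (simp add: polyH_pCons linH)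

lemma polyH_linear_factor: "polyH ([:a, b:] * q) x = a *s polyH q x + b *s H (polyH q x)"
  by (simp only: polyH_mult polyH_linear_poly)

lemma polyH_eigenvector: "H w = \<mu> *s w \<Longrightarrow> polyH q w = poly q \<mu> *s w"
  by (induction q) (simp_all add: polyH_pCons linH scale_left_distrib)

lemma Hpow_polyH: "(H ^^ n) (polyH q x) = polyH q ((H ^^ n) x)"
proof -
  have "H (polyH q x) = polyH q (H x)" for x
    by (induction q) (simp_all add: polyH_pCons linH)
  then show ?thesis by (induction n) simp_all
qed

lemma H_Upow: "H ((U ^^ k) x) = s ^ k *s (U ^^ k) (H x)"
  by (induction k) (simp_all add: H_U linU)

lemma H_Dpow: "H ((D ^^ k) x) = inverse s ^ k *s (D ^^ k) (H x)"
proof -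
  have "H (D x) = inverse s *s D (H x)" for x using s_nz by (simp add: D_H)
  then show ?thesis by (induction k) (simp_all add: linD)
qed

lemma Hpow_Upow: "(H ^^ n) ((U ^^ k) x) = (s ^ k) ^ n *s (U ^^ k) ((H ^^ n) x)"
  by (induction n)
    (simp_all add: H_Upow linH Upow power_mult_distrib mult.commute flip: funpow_swap1)

lemma Hpow_Dpow: "(H ^^ n) ((D ^^ k) x) = (inverse s ^ k) ^ n *s (D ^^ k) ((H ^^ n) x)"
  by (induction n)
    (simp_all add: H_Dpow linH Dpow power_mult_distrib mult.commute flip: funpow_swap1)

lemma surj_Hpow: "surj (H ^^ n)"
proof (induction n)
  case (Suc n)
  have "H ^^ Suc n = H ^^ n \<circ> H" by (simp add: funpow_Suc_right del: funpow.simps)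
  then show ?case using comp_surj[OF H_surj Suc.IH] by simp
qed simp

lemma polyH_kernel_eigenvalue:
  "q \<noteq> 0 \<Longrightarrow> x \<noteq> 0 \<Longrightarrow> polyH q x = 0 \<Longrightarrow> \<exists>w \<mu>. w \<noteq> 0 \<and> H w = \<mu> *s w \<and> poly q \<mu> = 0"
proof (induction "degree q" arbitrary: q rule: less_induct)
  case less
  show ?case
  proof (cases "degree q = 0")
    case True
    then obtain a where "q = [:a:]" by (metis degree_eq_zeroE)
    with less show ?thesis by (simp add: polyH_const)
  next
    case False
    then obtain z where z: "poly q z = 0"
      using fundamental_theorem_of_algebra[of q] constant_degree[of q] by auto
    then obtain q' where q': "q = [:-z, 1:] * q'" using poly_eq_0_iff_dvd by blast
    have "q' \<noteq> 0" using less(2) q' by auto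
    then have deg: "degree q' < degree q" unfolding q' by (subst degree_mult_eq) auto
    let ?y = "polyH q' x"
    have "polyH q x = - z *s ?y + H ?y" unfolding q' by (simp only: polyH_mult polyH_linear_poly) simp
    then have "H ?y = z *s ?y" using less(4) by (simp add: add_eq_0_iff2 scale_minus_left)
    then show ?thesis
      using less(1)[OF deg \<open>q' \<noteq> 0\<close> less(3)] z q' by (cases "?y = 0") auto
  qed
qed

text \<open>A vector whose iterates under F scale the eigenvalue by powers of t (not a root of
  unity) is eventually mapped to 0: otherwise q would have infinitely many roots.\<close>
lemma eigen_string_terminates:
  assumes t: "t \<noteq> 0" "\<forall>n::nat. n > 0 \<longrightarrow> t ^ n \<noteq> 1" and l: "l0 \<noteq> 0"
    and q: "q \<noteq> 0" and roots: "\<And>v \<mu>. v \<noteq> 0 \<Longrightarrow> H v = \<mu> *s v \<Longrightarrow> poly q \<mu> = 0"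
    and w: "w \<noteq> 0" and eigen: "\<And>k. H ((F ^^ k) w) = (t ^ k * l0) *s (F ^^ k) w"
  shows "\<exists>k. (F ^^ k) w \<noteq> 0 \<and> F ((F ^^ k) w) = 0"
proof (rule ccontr)
  assume "\<not> ?thesis"
  then have "(F ^^ k) w \<noteq> 0" for k by (induction k) (use w in auto)
  then have "range (\<lambda>k::nat. t ^ k * l0) \<subseteq> {x. poly q x = 0}"
    using roots eigen by auto
  moreover have "inj (\<lambda>k::nat. t ^ k * l0)"
    using power_inj_not_root_of_unity[OF t] l by (simp add: inj_def)
  then have "infinite (range (\<lambda>k::nat. t ^ k * l0))" by (simp add: range_inj_infinite)
  ultimately show False using poly_roots_finite[OF q] finite_subset by blast
qed

text \<open>Base case of faithfulness: q(H) = 0 on the module forces q = 0.  An eigenvalue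
  l0 of H gives a u-string and a d-string of eigenvalues s^k l0 and s^-j l0; their ends
  force s^(k+1) l0 = psi0 = s^-j l0, so s would be a root of unity.\<close>
lemma polyH_faithful: "(\<forall>x. polyH q x = 0) \<Longrightarrow> q = 0"
proof (rule ccontr)
  assume all0: "\<forall>x. polyH q x = 0" and q: "q \<noteq> 0"
  obtain x :: 'm where "x \<noteq> 0" using nontrivial by blast
  then obtain w l0 where w: "w \<noteq> 0" "H w = l0 *s w"
    using polyH_kernel_eigenvalue[OF q] all0 by blast
  have l: "l0 \<noteq> 0"
    using w H_inj by (metis H_add.zero injD scale_zero_left)
  have roots: "poly q \<mu> = 0" if "v \<noteq> 0" "H v = \<mu> *s v" for v \<mu>
    using polyH_eigenvector[OF that(2), of q] all0 that(1) by simp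
  have eig_U: "H ((U ^^ k) w) = (s ^ k * l0) *s (U ^^ k) w" for k
    by (simp add: H_Upow Upow w(2))
  have eig_D: "H ((D ^^ k) w) = (inverse s ^ k * l0) *s (D ^^ k) w" for k
    by (simp add: H_Dpow Dpow w(2))
  have "\<exists>k. (U ^^ k) w \<noteq> 0 \<and> U ((U ^^ k) w) = 0"
    by (rule eigen_string_terminates[where F = U, OF s_nz s_not_root l q]) (use roots w eig_U in auto)
  then obtain k where k: "(U ^^ k) w \<noteq> 0" "U ((U ^^ k) w) = 0" by blast
  have "\<exists>j. (D ^^ j) w \<noteq> 0 \<and> D ((D ^^ j) w) = 0"
    by (rule eigen_string_terminates[where F = D, OF _ not_root_of_unity_inverse[OF s_not_root] l q])
      (use s_nz roots w eig_D in auto)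
  then obtain j where j: "(D ^^ j) w \<noteq> 0" "D ((D ^^ j) w) = 0" by blast
  have "0 = D (U ((U ^^ k) w))" using k by simp
  also have "\<dots> = (s * (s ^ k * l0) - \<psi>0) *s (U ^^ k) w"
    by (simp only: D_U eig_U scale_left_diff_distrib scale_scale)
  finally have top: "s * (s ^ k * l0) = \<psi>0" using k(1) by simp
  have "0 = U (D ((D ^^ j) w))" using j by simp
  also have "\<dots> = (inverse s ^ j * l0 - \<psi>0) *s (D ^^ j) w"
    by (simp only: U_D eig_D scale_left_diff_distrib)
  finally have bottom: "inverse s ^ j * l0 = \<psi>0" using j(1) by simp
  have "s ^ (Suc k + j) * l0 = s ^ j * (inverse s ^ j * l0)"
    using top bottom by (simp add: power_add mult_ac)
  also have "\<dots> = l0" using s_nz by (simp add: power_inverse mult.assoc[symmetric] flip: power_mult_distrib)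
  finally have "s ^ (Suc k + j) = 1" using l by simp
  with s_not_root show False by auto
qed

text \<open>Faithfulness propagates through u^e on the left and d^e on the right, using
  du = s H - psi0 to trade one factor of u or d for a linear factor in H.\<close>
lemma Upow_polyH_faithful: "(\<forall>x. (U ^^ e) (polyH q x) = 0) \<Longrightarrow> q = 0"
proof (induction e arbitrary: q)
  case 0 then show ?case using polyH_faithful by simp
next
  case (Suc e)
  have "(U ^^ e) (polyH ([:- \<psi>0, s ^ Suc e:] * q) x) = 0" for x
  proof -
    let ?z = "(U ^^ e) (polyH q x)"
    have "0 = D (U ?z)" using Suc.prems by simp
    also have "\<dots> = s *s H ?z - \<psi>0 *s ?z" by (rule D_U)
    also have "\<dots> = (U ^^ e) (polyH ([:- \<psi>0, s ^ Suc e:] * q) x)"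
      by (subst polyH_linear_factor) (simp add: H_Upow Upow Upow_add.add Upow_add.diff algebra_simps)
    finally show ?thesis by simp
  qed
  then have "[:- \<psi>0, s ^ Suc e:] * q = 0" using Suc.IH by blast
  moreover have "[:- \<psi>0, s ^ Suc e:] \<noteq> 0" using s_nz by simp
  ultimately show ?case by (metis mult_eq_0_iff)
qed

lemma polyH_Dpow_faithful: "(\<forall>x. polyH q ((D ^^ e) x) = 0) \<Longrightarrow> q = 0"
proof (induction e arbitrary: q)
  case 0 then show ?case using polyH_faithful by simp
next
  case (Suc e)
  have "polyH (q * [:- \<psi>0, s ^ Suc e:]) ((D ^^ e) y) = 0" for y
  proof -
    have Dpow_H: "(D ^^ e) (H y) = s ^ e *s H ((D ^^ e) y)"
      using s_nz by (simp add: H_Dpow power_inverse)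
    have "0 = polyH q ((D ^^ Suc e) (U y))" using Suc.prems by simp
    also have "(D ^^ Suc e) (U y) = (D ^^ e) (D (U y))"
      by (simp add: funpow_Suc_right del: funpow.simps)
    also have "\<dots> = polyH [:- \<psi>0, s ^ Suc e:] ((D ^^ e) y)"
      by (simp add: D_U Dpow_add.diff Dpow Dpow_H polyH_linear_poly algebra_simps)
    finally show ?thesis by (simp only: polyH_mult)
  qed
  then have "q * [:- \<psi>0, s ^ Suc e:] = 0" using Suc.IH by blast
  moreover have "[:- \<psi>0, s ^ Suc e:] \<noteq> 0" using s_nz by simp
  ultimately show ?case by (metis mult_eq_0_iff)
qed

text \<open>Conjugating by H^n
  turns the sum into a power sum with the distinct weights s^i and s^-(i+1).\<close>
lemma normal_sum_faithful:
  assumes zero: "\<forall>m. (\<Sum>i<N. (U ^^ i) (polyH (P i) m)) + (\<Sum>i<N. polyH (Q i) ((D ^^ Suc i) m)) = 0"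
  shows "\<forall>i<N. P i = 0 \<and> Q i = 0"
proof -
  define a where "a x i = (U ^^ i) (polyH (P i) x)" for x i
  define b where "b x i = polyH (Q i) ((D ^^ Suc i) x)" for x i
  let ?K = "{..<N} <+> {..<N}"
  let ?c = "case_sum (\<lambda>i. s ^ i) (\<lambda>i. inverse s ^ Suc i)"
  have power_sums: "(\<Sum>k\<in>?K. ?c k ^ n *s case_sum (a x) (b x) k) = 0" for x n
  proof -
    obtain m where m: "(H ^^ n) m = x" using surj_Hpow[of n] by (metis surjD)
    have "0 = (H ^^ n) ((\<Sum>i<N. (U ^^ i) (polyH (P i) m)) + (\<Sum>i<N. polyH (Q i) ((D ^^ Suc i) m)))"
      using zero by (simp add: Hpow_add.zero)
    also have "\<dots> = (\<Sum>i<N. (s ^ i) ^ n *s a x i) + (\<Sum>i<N. (inverse s ^ Suc i) ^ n *s b x i)"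
      unfolding a_def b_def
      by (simp add: Hpow_add.add Hpow_add.sum Hpow_Upow Hpow_polyH Hpow_Dpow polyH_linear m
          del: funpow.simps)
    finally show ?thesis by (simp add: sum.Plus comp_def)
  qed
  have weights_inj: "inj_on ?c ?K"
  proof -
    have inj_s: "inj (\<lambda>k::nat. s ^ k)" by (rule power_inj_not_root_of_unity[OF s_nz s_not_root])
    have inj_inv: "inj (\<lambda>k::nat. inverse s ^ k)"
      by (rule power_inj_not_root_of_unity) (use s_nz not_root_of_unity_inverse[OF s_not_root] in auto)
    have apart: "s ^ i \<noteq> inverse s ^ Suc j" for i j
    proof
      assume "s ^ i = inverse s ^ Suc j"
      then have "s ^ i * s ^ Suc j = 1"
        using s_nz by (simp add: power_inverse field_simps del: power_Suc)
      then have "s ^ (i + Suc j) = 1" by (simp only: power_add)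
      with s_not_root show False by auto
    qed
    show ?thesis
    proof (rule inj_onI)
      fix u v assume "?c u = ?c v"
      then show "u = v"
        by (cases u; cases v)
          (simp_all add: inj_eq[OF inj_s] inj_eq[OF inj_inv] apart apart[symmetric] del: power_Suc)
    qed
  qed
  have ab: "a x i = 0 \<and> b x i = 0" if "i < N" for x i
  proof -
    have "\<forall>k\<in>?K. case_sum (a x) (b x) k = 0"
      by (rule vandermonde_vanishing[OF _ weights_inj]) (simp_all add: power_sums)
    then show ?thesis using that by (auto dest: bspec[of _ _ "Inl i"] bspec[of _ _ "Inr i"])
  qed
  show ?thesis
  proof (intro allI impI conjI)
    fix i assume "i < N"
    show "P i = 0" by (rule Upow_polyH_faithful[where e = i]) (use ab[OF \<open>i < N\<close>] in \<open>simp add: a_def\<close>)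
    show "Q i = 0" by (rule polyH_Dpow_faithful[where e = "Suc i"]) (use ab[OF \<open>i < N\<close>] in \<open>simp add: b_def\<close>)
  qed
qed

end


section \<open>Simple modules on which h acts by zero\<close>

text \<open>The hypotheses of the theorem.\<close>
locale null_h_module =
  fixes \<phi> \<psi> :: "complex poly" and r s :: complex
    and sc :: "complex \<Rightarrow> 'm::ab_group_add \<Rightarrow> 'm" (infixr "*s" 75) and U D Hh :: "'m \<Rightarrow> 'm"
  assumes s_nz: "s \<noteq> 0"
    and conformal: "conformal_witness \<phi> r s \<psi>"
    and s_not_root: "\<forall>n::nat. n > 0 \<longrightarrow> s ^ n \<noteq> 1"
    and simple: "is_simple_L_module \<phi> r s sc U D Hh"
    and H_onto: "\<forall>m. \<exists>m'. act sc U D Hh (uF * dF + poly_h \<psi>) m' = m"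
    and h_null: "\<forall>m. act sc U D Hh hF m = 0"
begin

sublocale free_rep sc U D Hh
  using simple by (simp add: is_simple_L_module_def is_L_module_def free_rep_def free_rep_axioms_def)

sublocale quot: conformal_quotient \<phi> \<psi> r s
proof
  show "s \<noteq> 0" by (rule s_nz)
  show "s * poly \<psi> 0 - poly \<psi> 0 = poly \<phi> 0"
    using conformal unfolding conformal_witness_def by (metis mult_zero_right)
qed

lemma relations_act_zero: "x \<in> L_rels \<phi> r s \<Longrightarrow> act sc U D Hh x m = 0"
  using simple by (simp add: is_simple_L_module_def is_L_module_def)

lemma U_linear: "U (x + y) = U x + U y" "U (c *s x) = c *s U x"
  and D_linear: "D (x + y) = D x + D y" "D (c *s x) = c *s D x"
  using linear_ops by (simp_all add: Vector_Spaces.linear_iff)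

lemma act_u: "act sc U D Hh uF = U" and act_d: "act sc U D Hh dF = D"
  by (auto simp: act_gen gen_op_def)

lemma Hh_zero: "Hh m = 0"
  using h_null act_gen[of Gh] by (simp add: gen_op_def)

lemma act_poly_h: "act sc U D Hh (poly_h p) m = poly p 0 *s m"
proof -
  have h_pow: "act sc U D Hh (hF ^ i) m = (if i = 0 then m else 0)" for i
    by (cases i) (simp_all add: act_one act_mult h_null act_vec.zero)
  have "act sc U D Hh (poly_h p) m = (\<Sum>i\<le>degree p. if i = 0 then coeff p i *s m else 0)"
    by (simp add: poly_h_def act_alg.sum act_mult act_cst h_pow if_distrib[of "sc _"] cong: if_cong)
  also have "\<dots> = poly p 0 *s m" by (simp add: poly_0_coeff_0)
  finally show ?thesis .
qed

definition Hop :: "'m \<Rightarrow> 'm" where "Hop m = U (D m) + poly \<psi> 0 *s m"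

lemma act_H: "act sc U D Hh (uF * dF + poly_h \<psi>) m = Hop m"
  by (simp add: act_alg.add act_mult act_u act_d act_poly_h Hop_def)

lemma act_HF: "act sc U D Hh quot.HF m = Hop m"
  by (simp add: quot.HF_def act_alg.add act_mult act_u act_d act_cst Hop_def)

lemma D_U: "D (U m) = s *s U (D m) + poly \<phi> 0 *s m"
proof -
  have "act sc U D Hh (dF * uF - cst s * (uF * dF) - poly_h \<phi>) m = 0"
    by (rule relations_act_zero) (simp add: L_rels_def)
  then have "D (U m) - s *s U (D m) - poly \<phi> 0 *s m = 0"
    by (simp only: act_alg.diff act_mult act_u act_d act_cst act_poly_h)
  then show ?thesis by (simp add: algebra_simps)
qed

lemma Hop_linear: "Hop (x + y) = Hop x + Hop y" "Hop (c *s x) = c *s Hop x"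
  by (simp_all add: Hop_def U_linear D_linear scale_right_distrib algebra_simps)

lemma conformal_scale: "poly \<phi> 0 *s x + poly \<psi> 0 *s x = (s * poly \<psi> 0) *s x"
proof -
  have "poly \<phi> 0 + poly \<psi> 0 = s * poly \<psi> 0" using quot.conformal_at_0 by (simp add: algebra_simps)
  then show ?thesis by (simp add: scale_left_distrib[symmetric])
qed

lemma Hop_U: "Hop (U x) = s *s U (Hop x)"
proof -
  have "Hop (U x) = s *s U (U (D x)) + (poly \<phi> 0 *s U x + poly \<psi> 0 *s U x)"
    by (simp add: Hop_def D_U U_linear algebra_simps)
  also have "\<dots> = s *s U (Hop x)"
    by (simp only: conformal_scale) (simp add: Hop_def U_linear scale_right_distrib)
  finally show ?thesis .
qed

lemma D_Hop: "D (Hop x) = s *s Hop (D x)"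
proof -
  have "D (Hop x) = s *s U (D (D x)) + (poly \<phi> 0 *s D x + poly \<psi> 0 *s D x)"
    by (simp add: Hop_def D_U D_linear algebra_simps)
  also have "\<dots> = s *s Hop (D x)"
    by (simp only: conformal_scale) (simp add: Hop_def scale_right_distrib)
  finally show ?thesis .
qed

lemma D_U_Hop: "D (U x) = s *s Hop x - poly \<psi> 0 *s x"
  using conformal_scale[of x] by (simp add: D_U Hop_def scale_right_distrib algebra_simps)

lemma U_D_Hop: "U (D x) = Hop x - poly \<psi> 0 *s x"
  by (simp add: Hop_def)

lemma Hop_surj: "surj Hop"
  using H_onto act_H by (metis surjI)

text \<open>The kernel of H is a submodule (u and d rescale H), hence trivial since H is onto.\<close>
lemma Hop_inj: "inj Hop"
proof -
  define N where "N = {m. Hop m = 0}"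
  have Hop_zero: "Hop 0 = 0" using Hop_linear(2)[of 0 0] by simp
  have U_zero: "U 0 = 0" and D_zero: "D 0 = 0" using U_linear(2)[of 0 0] D_linear(2)[of 0 0] by simp_all
  have "is_submodule sc U D Hh N"
  proof (rule stable_subspace_is_submodule)
    show "subspace N" unfolding subspace_def N_def by (simp add: Hop_zero Hop_linear)
    fix g m assume m: "m \<in> N"
    have "Hop (U m) = 0" using m by (simp add: N_def Hop_U U_zero)
    moreover have "Hop (D m) = 0" using m D_Hop[of m] s_nz by (simp add: N_def D_zero)
    ultimately show "gen_op U D Hh g m \<in> N"
      by (cases g) (simp_all add: N_def gen_op_def Hh_zero Hop_zero)
  qed
  then have "N = {0} \<or> N = UNIV"
    using simple by (simp add: is_simple_L_module_def)
  moreover have "N \<noteq> UNIV"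
  proof
    assume "N = UNIV"
    have "m = 0" for m :: 'm
    proof -
      obtain m' where "m = Hop m'" using Hop_surj by blast
      with \<open>N = UNIV\<close> show ?thesis by (auto simp: N_def)
    qed
    then show False using simple by (auto simp: is_simple_L_module_def)
  qed
  ultimately have kernel: "N = {0}" by simp
  show ?thesis
  proof (rule injI)
    fix x y assume "Hop x = Hop y"
    then have "x - y \<in> N" using Hop_linear(1)[of "x - y" y] by (simp add: N_def)
    then show "x = y" using kernel by simp
  qed
qed

sublocale twisted: twisted_module sc U D Hop s "poly \<psi> 0"
proof unfold_locales
  show "\<exists>x::'m. x \<noteq> 0" using simple by (auto simp: is_simple_L_module_def)
qed (simp_all add: U_linear D_linear Hop_linear Hop_inj Hop_surj Hop_U D_Hop D_U_Hop U_D_Hop s_nz s_not_root)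

lemma act_umon: "act sc U D Hh (quot.umon i p) m = (U ^^ i) (twisted.polyH p m)"
  and act_dmon: "act sc U D Hh (quot.dmon i q) m = twisted.polyH q ((D ^^ Suc i) m)"
proof -
  have act_polyHF: "act sc U D Hh (quot.polyHF q) m = twisted.polyH q m" for q m
    by (simp add: quot.polyHF_def twisted.polyH_def act_alg.sum act_mult act_cst act_power
        act_HF[abs_def] del: funpow.simps)
  show "act sc U D Hh (quot.umon i p) m = (U ^^ i) (twisted.polyH p m)"
    by (simp add: quot.umon_def act_mult act_power act_u act_polyHF del: funpow.simps)
  show "act sc U D Hh (quot.dmon i q) m = twisted.polyH q ((D ^^ Suc i) m)"
    by (simp only: quot.dmon_def act_mult act_power act_d act_polyHF)
qed

lemma ideal_annihilates: "ideal_gen ({hF} \<union> L_rels \<phi> r s) \<subseteq> ann_free sc U D Hh"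
  by (rule ideal_gen_annihilates) (auto simp: ann_free_def h_null relations_act_zero)

text \<open>Reduce an annihilating element to a normal form; the normal form also annihilates
  and so vanishes by faithfulness.\<close>
lemma annihilator_in_ideal: "ann_free sc U D Hh \<subseteq> ideal_gen ({hF} \<union> L_rels \<phi> r s)"
proof
  fix p assume p: "p \<in> ann_free sc U D Hh"
  obtain z where z: "z \<in> quot.normal_forms" "p - z \<in> quot.I"
    using quot.normal_form_exists by blast
  obtain N P Q where z_sum: "z = (\<Sum>i<N. quot.umon i (P i)) + (\<Sum>i<N. quot.dmon i (Q i))"
    using quot.normal_form_sum[OF z(1)] by blast
  have "p - z \<in> ann_free sc U D Hh"
    using ideal_annihilates z(2) by (auto simp: quot.I_def)
  then have "act sc U D Hh z m = 0" for m
    using p by (simp add: ann_free_def act_alg.diff)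
  then have "\<forall>m. (\<Sum>i<N. (U ^^ i) (twisted.polyH (P i) m))
      + (\<Sum>i<N. twisted.polyH (Q i) ((D ^^ Suc i) m)) = 0"
    by (simp add: z_sum act_alg.add act_alg.sum act_umon act_dmon del: funpow.simps)
  then have "\<forall>i<N. P i = 0 \<and> Q i = 0" by (rule twisted.normal_sum_faithful)
  then have "z = 0" by (simp add: z_sum)
  then show "p \<in> ideal_gen ({hF} \<union> L_rels \<phi> r s)" using z(2) by (simp add: quot.I_def)
qed

end

theorem mainTheorem11:
  fixes \<phi> \<psi> :: "complex poly" and r s :: complex
    and sc :: "complex \<Rightarrow> 'm::ab_group_add \<Rightarrow> 'm" and U D Hh :: "'m \<Rightarrow> 'm"
  assumes "r \<noteq> 0" and "s \<noteq> 0"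
    and "conformal_witness \<phi> r s \<psi>"
    and "\<forall>n::nat. n > 0 \<longrightarrow> s ^ n \<noteq> 1"
    and "is_simple_L_module \<phi> r s sc U D Hh"
    and "\<forall>m. \<exists>m'. act sc U D Hh (uF * dF + poly_h \<psi>) m' = m"
    and "\<forall>m. act sc U D Hh hF m = 0"
  shows "ann_free sc U D Hh = ideal_gen ({hF} \<union> L_rels \<phi> r s)"
proof -
  interpret null_h_module \<phi> \<psi> r s sc U D Hh
    using assms(2-7) by unfold_locales
  show ?thesis
    using annihilator_in_ideal ideal_annihilates by (rule subset_antisym)
qed

end
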